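(* If $G$ is a regular hypo-efficient domination graph having at least one $\gamma$-critical vertex, then $|V(G)|=(\Delta(G)+1)(\gamma(G)-1)+1=(\delta(G)+1)(\gamma(G)-1)+1$.
   Context: All graphs are finite, simple and undirected. For $v\in V(G)$, $N[v]$ is the closed neighborhood of $v$. A set $D\subseteq V(G)$ is dominating if every vertex of $G$ not in $D$ has a neighbor in $D$; $\gamma(G)$ is the minimum size of a dominating set. A vertex $v$ is $\gamma$-critical if $\gamma(G-v)<\gamma(G)$. A set $D\subseteq V(H)$ is an efficient dominating set (EDS) of $H$ if $|N_H[v]\cap D|=1$ for every $v\in V(H)$. $G$ is a hypo-efficient domination graph if $G$ has no EDS but $G-v$ has at least one EDS for every $v\in V(G)$. $\delta(G)$, $\Delta(G)$ are the minimum and maximum degree. *)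

theory Defs
  imports Main
begin

text \<open>Vertex deletion G - v is (V - {v}, E): all notions below only look at
  edges between vertices of the given vertex set.\<close>

definition simple_graph :: "'a set \<Rightarrow> ('a \<Rightarrow> 'a \<Rightarrow> bool) \<Rightarrow> bool" where
  "simple_graph V E \<longleftrightarrow> finite V \<and> (\<forall>x y. E x y \<longrightarrow> x \<in> V \<and> y \<in> V)
     \<and> (\<forall>x y. E x y \<longrightarrow> E y x) \<and> (\<forall>x. \<not> E x x)"

definition closed_nbhd :: "'a set \<Rightarrow> ('a \<Rightarrow> 'a \<Rightarrow> bool) \<Rightarrow> 'a \<Rightarrow> 'a set" where
  "closed_nbhd V E v = {u \<in> V. u = v \<or> E v u}"

definition degree :: "'a set \<Rightarrow> ('a \<Rightarrow> 'a \<Rightarrow> bool) \<Rightarrow> 'a \<Rightarrow> nat" where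
  "degree V E v = card {u \<in> V. E v u}"

definition max_degree :: "'a set \<Rightarrow> ('a \<Rightarrow> 'a \<Rightarrow> bool) \<Rightarrow> nat" where
  "max_degree V E = Max (degree V E ` V)"

definition min_degree :: "'a set \<Rightarrow> ('a \<Rightarrow> 'a \<Rightarrow> bool) \<Rightarrow> nat" where
  "min_degree V E = Min (degree V E ` V)"

definition regular :: "'a set \<Rightarrow> ('a \<Rightarrow> 'a \<Rightarrow> bool) \<Rightarrow> bool" where
  "regular V E \<longleftrightarrow> (\<forall>u\<in>V. \<forall>w\<in>V. degree V E u = degree V E w)"

definition dominating :: "'a set \<Rightarrow> ('a \<Rightarrow> 'a \<Rightarrow> bool) \<Rightarrow> 'a set \<Rightarrow> bool" where
  "dominating V E D \<longleftrightarrow> D \<subseteq> V \<and> (\<forall>v \<in> V - D. \<exists>u \<in> D. E v u)"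

definition domination_number :: "'a set \<Rightarrow> ('a \<Rightarrow> 'a \<Rightarrow> bool) \<Rightarrow> nat" where
  "domination_number V E = Min (card ` {D. dominating V E D})"

definition gamma_critical :: "'a set \<Rightarrow> ('a \<Rightarrow> 'a \<Rightarrow> bool) \<Rightarrow> 'a \<Rightarrow> bool" where
  "gamma_critical V E v \<longleftrightarrow> v \<in> V \<and>
     domination_number (V - {v}) E < domination_number V E"

definition efficient_dominating :: "'a set \<Rightarrow> ('a \<Rightarrow> 'a \<Rightarrow> bool) \<Rightarrow> 'a set \<Rightarrow> bool" where
  "efficient_dominating V E D \<longleftrightarrow> D \<subseteq> V \<and> (\<forall>v \<in> V. card (closed_nbhd V E v \<inter> D) = 1)"

definition hypo_efficient :: "'a set \<Rightarrow> ('a \<Rightarrow> 'a \<Rightarrow> bool) \<Rightarrow> bool" where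
  "hypo_efficient V E \<longleftrightarrow> \<not> (\<exists>D. efficient_dominating V E D)
     \<and> (\<forall>v \<in> V. \<exists>D. efficient_dominating (V - {v}) E D)"

end

theory Submission
  imports Defs
begin

text \<open>Let \<open>v\<close> be \<open>\<gamma>\<close>-critical and \<open>D\<close> an efficient dominating set of \<open>G - v\<close>.
  Efficient dominating sets have minimum size, so \<open>|D| \<le> \<gamma>(G - v) < \<gamma>(G)\<close>. Hence no
  vertex of \<open>D\<close> is adjacent to \<open>v\<close> (otherwise \<open>D\<close> would dominate \<open>G\<close>), while \<open>D \<union> {v}\<close>
  dominates \<open>G\<close>; thus \<open>\<gamma>(G) = |D| + 1\<close>. The closed neighbourhoods of \<open>D\<close> partition
  \<open>V - {v}\<close> and, being the same in \<open>G\<close> and \<open>G - v\<close>, each has \<open>\<Delta>(G) + 1\<close> vertices.\<close>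

lemma finite_dominating_sets:
  assumes "finite V"
  shows "finite {D. dominating V E D}"
  using assms by (rule finite_subset[rotated, OF finite_Pow_iff[THEN iffD2]])
    (auto simp: dominating_def)

lemma domination_number_le_card:
  assumes "finite V" and "dominating V E D"
  shows "domination_number V E \<le> card D"
  unfolding domination_number_def
  using assms finite_dominating_sets[OF assms(1)] by (intro Min_le) auto

lemma ex_dominating_card_domination_number:
  assumes "finite V"
  obtains D where "dominating V E D" and "card D = domination_number V E"
proof -
  have "dominating V E V" by (simp add: dominating_def)
  then have "card ` {D. dominating V E D} \<noteq> {}" by blast
  from Min_in[OF finite_imageI[OF finite_dominating_sets[OF assms]] this] that
  show thesis unfolding domination_number_def by auto
qed

lemma closed_nbhd_sym:
  assumes "\<And>x y. E x y \<Longrightarrow> E y x" and "u \<in> V" and "w \<in> V"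
  shows "u \<in> closed_nbhd V E w \<longleftrightarrow> w \<in> closed_nbhd V E u"
  using assms by (auto simp: closed_nbhd_def)

lemma efficient_dominating_ex:
  assumes "efficient_dominating V E D" and "u \<in> V"
  obtains d where "d \<in> D" and "d \<in> closed_nbhd V E u"
  using assms unfolding efficient_dominating_def by (metis card_1_singletonE Int_iff insertI1)

lemma efficient_dominating_unique:
  assumes "efficient_dominating V E D" and "u \<in> V"
    and "a \<in> closed_nbhd V E u \<inter> D" and "b \<in> closed_nbhd V E u \<inter> D"
  shows "a = b"
  using assms unfolding efficient_dominating_def by (metis card_1_singletonE singletonD)

lemma efficient_dominating_imp_dominating:
  assumes "efficient_dominating V E D"
  shows "dominating V E D"
  unfolding dominating_def
proof (intro conjI ballI)
  show "D \<subseteq> V" using assms by (simp add: efficient_dominating_def)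
  fix u assume "u \<in> V - D"
  then obtain d where "d \<in> D" "d \<in> closed_nbhd V E u"
    using efficient_dominating_ex[OF assms] by blast
  with \<open>u \<in> V - D\<close> show "\<exists>d\<in>D. E u d" by (auto simp: closed_nbhd_def)
qed

text \<open>Assign to each \<open>d \<in> D\<close> a vertex of \<open>S\<close> in \<open>N[d]\<close>; two vertices of \<open>D\<close> sharing it
  would both lie in its closed neighbourhood.\<close>

lemma card_efficient_dominating_le:
  assumes sym: "\<And>x y. E x y \<Longrightarrow> E y x" and "finite V"
    and D: "efficient_dominating V E D" and S: "dominating V E S"
  shows "card D \<le> card S"
proof -
  have "D \<subseteq> V" "S \<subseteq> V"
    using D S by (auto simp: efficient_dominating_def dominating_def)
  have "\<exists>s\<in>S. s \<in> closed_nbhd V E d" if "d \<in> D" for d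
  proof (cases "d \<in> S")
    case False
    with S that \<open>D \<subseteq> V\<close> obtain s where "s \<in> S" "E d s"
      unfolding dominating_def by blast
    with \<open>S \<subseteq> V\<close> show ?thesis by (auto simp: closed_nbhd_def)
  qed (use that \<open>D \<subseteq> V\<close> in \<open>auto simp: closed_nbhd_def\<close>)
  then obtain f where f: "\<And>d. d \<in> D \<Longrightarrow> f d \<in> S \<and> f d \<in> closed_nbhd V E d"
    using bchoice[of D "\<lambda>d s. s \<in> S \<and> s \<in> closed_nbhd V E d"] by blast
  have "inj_on f D"
  proof (rule inj_onI)
    fix a b assume "a \<in> D" "b \<in> D" "f a = f b"
    have "f a \<in> V" using f \<open>a \<in> D\<close> \<open>S \<subseteq> V\<close> by blast
    have "x \<in> closed_nbhd V E (f a) \<inter> D" if "x \<in> D" "f x = f a" for x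
    proof -
      have "f a \<in> closed_nbhd V E x" using f[OF \<open>x \<in> D\<close>] \<open>f x = f a\<close> by simp
      with \<open>x \<in> D\<close> \<open>D \<subseteq> V\<close> \<open>f a \<in> V\<close> show ?thesis
        using closed_nbhd_sym[of E, OF sym] by blast
    qed
    from this[OF \<open>a \<in> D\<close> refl] this[OF \<open>b \<in> D\<close> \<open>f a = f b\<close>[symmetric]]
    show "a = b" by (rule efficient_dominating_unique[OF D \<open>f a \<in> V\<close>])
  qed
  with f \<open>S \<subseteq> V\<close> \<open>finite V\<close> show ?thesis
    by (intro card_inj_on_le) (auto intro: finite_subset)
qed

lemma card_eq_sum_closed_nbhd_efficient_dominating:
  assumes sym: "\<And>x y. E x y \<Longrightarrow> E y x" and "finite V"
    and D: "efficient_dominating V E D"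
  shows "card V = (\<Sum>d\<in>D. card (closed_nbhd V E d))"
proof -
  have "D \<subseteq> V" using D by (simp add: efficient_dominating_def)
  have cover: "V = (\<Union>d\<in>D. closed_nbhd V E d)"
  proof
    show "V \<subseteq> (\<Union>d\<in>D. closed_nbhd V E d)"
    proof
      fix u assume "u \<in> V"
      then obtain d where "d \<in> D" "d \<in> closed_nbhd V E u"
        by (rule efficient_dominating_ex[OF D])
      with \<open>u \<in> V\<close> \<open>D \<subseteq> V\<close> closed_nbhd_sym[of E, OF sym] show "u \<in> (\<Union>d\<in>D. closed_nbhd V E d)"
        by blast
    qed
  qed (auto simp: closed_nbhd_def)
  have disjoint: "closed_nbhd V E a \<inter> closed_nbhd V E b = {}"
    if "a \<in> D" "b \<in> D" "a \<noteq> b" for a b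
  proof (rule ccontr)
    assume "closed_nbhd V E a \<inter> closed_nbhd V E b \<noteq> {}"
    then obtain u where u: "u \<in> closed_nbhd V E a" "u \<in> closed_nbhd V E b" by blast
    then have "u \<in> V" by (simp add: closed_nbhd_def)
    with u that \<open>D \<subseteq> V\<close> closed_nbhd_sym[of E, OF sym] have "a = b"
      by (intro efficient_dominating_unique[OF D \<open>u \<in> V\<close>]) auto
    with \<open>a \<noteq> b\<close> show False ..
  qed
  have "finite D" using \<open>D \<subseteq> V\<close> \<open>finite V\<close> by (rule finite_subset)
  then have "card (\<Union>d\<in>D. closed_nbhd V E d) = (\<Sum>d\<in>D. card (closed_nbhd V E d))"
    using \<open>finite V\<close> disjoint by (intro card_UN_disjoint) (auto simp: closed_nbhd_def)
  with cover show ?thesis by simp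
qed

lemma card_closed_nbhd:
  assumes "finite V" and "\<And>x. \<not> E x x" and "u \<in> V"
  shows "card (closed_nbhd V E u) = degree V E u + 1"
proof -
  have "closed_nbhd V E u = insert u {w \<in> V. E u w}"
    using assms(3) by (auto simp: closed_nbhd_def)
  then show ?thesis using assms by (simp add: degree_def)
qed

lemma regular_max_degree_min_degree:
  assumes "regular V E" and "u \<in> V"
  shows "max_degree V E = degree V E u" and "min_degree V E = degree V E u"
proof -
  have "degree V E ` V = {degree V E u}"
    using assms unfolding regular_def by blast
  then show "max_degree V E = degree V E u" "min_degree V E = degree V E u"
    by (simp_all add: max_degree_def min_degree_def)
qed

context
  fixes V :: "'a set" and E :: "'a \<Rightarrow> 'a \<Rightarrow> bool" and v :: 'a and D :: "'a set"
  assumes sym: "\<And>x y. E x y \<Longrightarrow> E y x" and "finite V"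
    and critical: "gamma_critical V E v"
    and D: "efficient_dominating (V - {v}) E D"
begin

lemma efficient_dominating_delete_subset: "D \<subseteq> V - {v}"
  using D by (simp add: efficient_dominating_def)

lemma card_efficient_dominating_delete_less:
  "card D < domination_number V E"
proof -
  obtain S where S: "dominating (V - {v}) E S" "card S = domination_number (V - {v}) E"
    using ex_dominating_card_domination_number \<open>finite V\<close> by blast
  have "card D \<le> card S"
    using card_efficient_dominating_le[OF sym _ D S(1)] \<open>finite V\<close> by simp
  also have "\<dots> < domination_number V E"
    using S(2) critical by (simp add: gamma_critical_def)
  finally show ?thesis .
qed

lemma gamma_critical_not_adjacent_efficient_dominating:
  assumes "d \<in> D"
  shows "\<not> E v d"
proof
  assume "E v d"
  have "dominating V E D"
    unfolding dominating_def
  proof (intro conjI ballI)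
    show "D \<subseteq> V" using efficient_dominating_delete_subset by blast
    fix u assume "u \<in> V - D"
    show "\<exists>w\<in>D. E u w"
    proof (cases "u = v")
      case True
      with \<open>E v d\<close> \<open>d \<in> D\<close> show ?thesis by blast
    next
      case False
      with \<open>u \<in> V - D\<close> have "u \<in> (V - {v}) - D" by blast
      with efficient_dominating_imp_dominating[OF D] show ?thesis
        unfolding dominating_def by blast
    qed
  qed
  then have "domination_number V E \<le> card D"
    by (rule domination_number_le_card[OF \<open>finite V\<close>])
  with card_efficient_dominating_delete_less show False by simp
qed

lemma domination_number_eq_card_efficient_dominating_delete:
  "domination_number V E = card D + 1"
proof -
  have "v \<in> V" using critical by (simp add: gamma_critical_def)
  have "finite D"
    using efficient_dominating_delete_subset \<open>finite V\<close> by (auto intro: finite_subset)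
  have "dominating V E (insert v D)"
    unfolding dominating_def
  proof (intro conjI ballI)
    show "insert v D \<subseteq> V" using efficient_dominating_delete_subset \<open>v \<in> V\<close> by blast
    fix u assume "u \<in> V - insert v D"
    then have "u \<in> (V - {v}) - D" by blast
    with efficient_dominating_imp_dominating[OF D] show "\<exists>w\<in>insert v D. E u w"
      unfolding dominating_def by blast
  qed
  then have "domination_number V E \<le> card (insert v D)"
    by (rule domination_number_le_card[OF \<open>finite V\<close>])
  also have "\<dots> = card D + 1"
  proof -
    have "v \<notin> D" using efficient_dominating_delete_subset by blast
    with \<open>finite D\<close> show ?thesis by simp
  qed
  finally show ?thesis using card_efficient_dominating_delete_less by linarith
qed

lemma closed_nbhd_delete_efficient_dominating:
  assumes "d \<in> D"
  shows "closed_nbhd (V - {v}) E d = closed_nbhd V E d"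
proof -
  have "\<not> E d v"
    using gamma_critical_not_adjacent_efficient_dominating[OF assms] sym by blast
  moreover have "d \<noteq> v" using assms efficient_dominating_delete_subset by blast
  ultimately show ?thesis by (auto simp: closed_nbhd_def)
qed

end

theorem corollary3p17:
  fixes V :: "'a set" and E :: "'a \<Rightarrow> 'a \<Rightarrow> bool"
  assumes "simple_graph V E"
    and "regular V E"
    and "hypo_efficient V E"
    and "\<exists>v. gamma_critical V E v"
  shows "card V = (max_degree V E + 1) * (domination_number V E - 1) + 1
       \<and> (max_degree V E + 1) * (domination_number V E - 1) + 1
         = (min_degree V E + 1) * (domination_number V E - 1) + 1"
proof -
  have "finite V" and sym: "\<And>x y. E x y \<Longrightarrow> E y x" and irrefl: "\<And>x. \<not> E x x"
    using assms(1) by (auto simp: simple_graph_def)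
  obtain v where critical: "gamma_critical V E v" using assms(4) ..
  then have "v \<in> V" by (simp add: gamma_critical_def)
  obtain D where D: "efficient_dominating (V - {v}) E D"
    using assms(3) \<open>v \<in> V\<close> by (auto simp: hypo_efficient_def)
  define k where "k = degree V E v"
  have degree_k: "max_degree V E = k" "min_degree V E = k"
    using regular_max_degree_min_degree[OF assms(2) \<open>v \<in> V\<close>] by (simp_all add: k_def)
  have "card (V - {v}) = (\<Sum>d\<in>D. card (closed_nbhd (V - {v}) E d))"
    using card_eq_sum_closed_nbhd_efficient_dominating[OF sym _ D] \<open>finite V\<close> by simp
  also have "\<dots> = (\<Sum>d\<in>D. k + 1)"
  proof (rule sum.cong)
    fix d assume "d \<in> D"
    then have "d \<in> V" using D by (auto simp: efficient_dominating_def)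
    have "degree V E d = k"
      using assms(2) \<open>d \<in> V\<close> \<open>v \<in> V\<close> unfolding regular_def k_def by blast
    with \<open>d \<in> D\<close> \<open>d \<in> V\<close> show "card (closed_nbhd (V - {v}) E d) = k + 1"
      by (simp add: closed_nbhd_delete_efficient_dominating[OF sym \<open>finite V\<close> critical D]
          card_closed_nbhd[OF \<open>finite V\<close> irrefl])
  qed simp
  finally have "card V - 1 = (k + 1) * card D"
    using \<open>v \<in> V\<close> by (simp add: card_Diff_singleton)
  moreover have "card V \<noteq> 0" using \<open>finite V\<close> \<open>v \<in> V\<close> by auto
  ultimately show ?thesis
    using degree_k domination_number_eq_card_efficient_dominating_delete[OF sym \<open>finite V\<close> critical D]
    by simp
qed

end
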